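(* Let $r,t$ be integers with $2\le r\le t\le 2r$ and $t\ge 3$, let $\alpha=2^r-1$, $\beta=2^{t-1}-2^{r-1}$, and let $\mathcal{C}\subseteq\mathbb{Z}_2^\alpha\times\mathbb{Z}_4^\beta$ be a $\mathbb{Z}_2\mathbb{Z}_4$-additive 1-perfect code. Let $\mathcal{C}'\subseteq\mathbb{Z}_2^{\alpha+1}\times\mathbb{Z}_4^\beta$ be obtained from $\mathcal{C}$ by inserting, at a fixed position of the $\mathbb{Z}_2$ part of every codeword $\mathbf{u}$, an extra binary coordinate equal to $w(\mathbf{u})\bmod 2$ (an even parity check coordinate). Then $\mathcal{C}'$ is not $\mathbb{Z}_2\mathbb{Z}_4$-cyclic.
   Context: A $\mathbb{Z}_2\mathbb{Z}_4$-additive code is an additive subgroup of $\mathbb{Z}_2^\alpha\times\mathbb{Z}_4^\beta$; vectors are written $\mathbf{u}=(u\mid u')$ with $u\in\mathbb{Z}_2^\alpha$, $u'\in\mathbb{Z}_4^\beta$. The weight is $w(\mathbf{u})=w_H(u)+w_L(u')$, where $w_H$ is Hamming weight and $w_L$ is Lee weight (Lee weights of $0,1,2,3$ are $0,1,2,1$). The Gray map $\phi:\mathbb{Z}_4\to\mathbb{Z}_2^2$ is $0\mapsto(0,0),1\mapsto(0,1),2\mapsto(1,1),3\mapsto(1,0)$, and $\Phi(u\mid u')=(u\mid\phi(u'_1),\dots,\phi(u'_\beta))$. A binary code $C\subseteq\mathbb{Z}_2^n$ is 1-perfect if the Hamming balls of radius 1 around its codewords partition $\mathbb{Z}_2^n$;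 a $\mathbb{Z}_2\mathbb{Z}_4$-additive code is 1-perfect if its Gray image is. With $\sigma(v_1,\dots,v_m)=(v_m,v_1,\dots,v_{m-1})$ and $\sigma(u\mid u')=(\sigma(u)\mid\sigma(u'))$, a $\mathbb{Z}_2\mathbb{Z}_4$-additive code is $\mathbb{Z}_2\mathbb{Z}_4$-cyclic if it is closed under $\sigma$. *)

theory Defs
  imports Main
begin

text \<open>Vectors of Z2^alpha x Z4^beta are pairs (u, u') of nat lists; entries of u lie in {0,1},
entries of u' in {0,1,2,3}.\<close>

type_synonym z2z4vec = "nat list \<times> nat list"

definition z2z4_space :: "nat \<Rightarrow> nat \<Rightarrow> z2z4vec set" where
  "z2z4_space \<alpha> \<beta> = {(u, u'). length u = \<alpha> \<and> length u' = \<beta> \<and>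
      (\<forall>x\<in>set u. x < 2) \<and> (\<forall>x\<in>set u'. x < 4)}"

definition z2z4_add :: "z2z4vec \<Rightarrow> z2z4vec \<Rightarrow> z2z4vec" where
  "z2z4_add v w = (map2 (\<lambda>a b. (a + b) mod 2) (fst v) (fst w),
                   map2 (\<lambda>a b. (a + b) mod 4) (snd v) (snd w))"

definition z2z4_zero :: "nat \<Rightarrow> nat \<Rightarrow> z2z4vec" where
  "z2z4_zero \<alpha> \<beta> = (replicate \<alpha> 0, replicate \<beta> 0)"

definition z2z4_neg :: "z2z4vec \<Rightarrow> z2z4vec" where
  "z2z4_neg v = (fst v, map (\<lambda>a. (4 - a) mod 4) (snd v))"

definition z2z4_additive :: "nat \<Rightarrow> nat \<Rightarrow> z2z4vec set \<Rightarrow> bool" where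
  "z2z4_additive \<alpha> \<beta> C \<longleftrightarrow> C \<subseteq> z2z4_space \<alpha> \<beta> \<and> z2z4_zero \<alpha> \<beta> \<in> C \<and>
     (\<forall>v\<in>C. \<forall>w\<in>C. z2z4_add v w \<in> C) \<and> (\<forall>v\<in>C. z2z4_neg v \<in> C)"

definition lee_wt :: "nat \<Rightarrow> nat" where
  "lee_wt a = (if a = 0 then 0 else if a = 2 then 2 else 1)"

definition z2z4_weight :: "z2z4vec \<Rightarrow> nat" where
  "z2z4_weight v = length (filter (\<lambda>a. a \<noteq> 0) (fst v)) + sum_list (map lee_wt (snd v))"

definition gray :: "nat \<Rightarrow> nat list" where
  "gray a = (if a = 0 then [0,0] else if a = 1 then [0,1] else if a = 2 then [1,1] else [1,0])"

definition Gray_map :: "z2z4vec \<Rightarrow> nat list" where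
  "Gray_map v = fst v @ concat (map gray (snd v))"

definition hamming_dist :: "nat list \<Rightarrow> nat list \<Rightarrow> nat" where
  "hamming_dist x y = length (filter (\<lambda>(a, b). a \<noteq> b) (zip x y))"

definition binvecs :: "nat \<Rightarrow> nat list set" where
  "binvecs n = {x. length x = n \<and> (\<forall>a\<in>set x. a < 2)}"

definition one_perfect :: "nat \<Rightarrow> nat list set \<Rightarrow> bool" where
  "one_perfect n B \<longleftrightarrow> B \<subseteq> binvecs n \<and>
     (\<forall>x\<in>binvecs n. \<exists>!c. c \<in> B \<and> hamming_dist x c \<le> 1)"

definition z2z4_one_perfect :: "nat \<Rightarrow> nat \<Rightarrow> z2z4vec set \<Rightarrow> bool" where
  "z2z4_one_perfect \<alpha> \<beta> C \<longleftrightarrow> z2z4_additive \<alpha> \<beta> C \<and> one_perfect (\<alpha> + 2 * \<beta>) (Gray_map ` C)"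

definition cshift :: "nat list \<Rightarrow> nat list" where
  "cshift xs = (if xs = [] then [] else last xs # butlast xs)"

definition z2z4_sigma :: "z2z4vec \<Rightarrow> z2z4vec" where
  "z2z4_sigma v = (cshift (fst v), cshift (snd v))"

definition z2z4_cyclic :: "z2z4vec set \<Rightarrow> bool" where
  "z2z4_cyclic C \<longleftrightarrow> (\<forall>v\<in>C. z2z4_sigma v \<in> C)"

text \<open>Insert parity coordinate w(u) mod 2 at position p (0-based, 0 \<le> p \<le> alpha) of the Z2 part.\<close>
definition parity_extend :: "nat \<Rightarrow> z2z4vec \<Rightarrow> z2z4vec" where
  "parity_extend p v = (take p (fst v) @ [z2z4_weight v mod 2] @ drop p (fst v), snd v)"

end

theory Submission
  imports Defs
begin

text \<open>Suppose the parity extension \<open>D\<close> of the perfect code \<open>C\<close> were cyclic. The words \<open>y\<close>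
with \<open>(y, 0) \<in> D\<close> form a binary cyclic code \<open>D\<^sub>0\<close> of length \<open>2\<^sup>r\<close>, and \<open>D\<^sub>0\<close> has no word of
weight 2, since such a word would come from a codeword of \<open>C\<close> of weight 1 or 2.

For \<open>r \<ge> 3\<close> the sphere-covering bound makes \<open>D\<^sub>0\<close> contain at least \<open>2\<^bsup>2\<^sup>r\<^sup>-\<^sup>1\<^esup>\<close> words. The map
\<open>x \<mapsto> x + rotate 1 x\<close> (multiplication by \<open>1 + X\<close>) is nilpotent on \<open>\<int>\<^sub>2\<^bsup>2\<^sup>r\<^esup>\<close>, and every proper step
in the chain of preimages of \<open>D\<^sub>0\<close> under its powers at least doubles the size. Hence
\<open>(1 + X)\<^bsup>2\<^sup>r\<^sup>-\<^sup>1\<^esup> = 1 + X\<^bsup>2\<^sup>r\<^sup>-\<^sup>1\<^esup>\<close>, a word of weight 2, lies in \<open>D\<^sub>0\<close>.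

For \<open>r = 2\<close> we have \<open>\<alpha> = 3\<close> and \<open>\<beta> \<in> {2, 6}\<close>. All \<open>\<int>\<^sub>4\<close> parts of codewords then have even sum,
and there are two \<open>\<int>\<^sub>4\<close> words of Lee weight 2, one fixed and one negated by a power of \<open>\<sigma>\<close> that
rotates the binary part by an odd amount. Completing them to codewords with binary parts of
weight 1, weight-2 freeness of \<open>D\<^sub>0\<close> forces both extended binary parts to be the same alternating
word, so the difference of the two codewords has weight 2.\<close>

section \<open>The Gray map\<close>

lemma nat_less_4_cases: "(a::nat) < 4 \<Longrightarrow> a = 0 \<or> a = 1 \<or> a = 2 \<or> a = 3"
  by auto

lemma hamming_dist_conv_card:
  "length x = length y \<Longrightarrow> hamming_dist x y = card {i. i < length x \<and> x!i \<noteq> y!i}"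
  unfolding hamming_dist_def length_filter_conv_card
  by (rule arg_cong[where f=card]) (auto simp: nth_zip)

lemma hamming_dist_append:
  "length a = length c \<Longrightarrow> hamming_dist (a @ b) (c @ d) = hamming_dist a c + hamming_dist b d"
  unfolding hamming_dist_def by simp

lemma hamming_dist_self [simp]: "hamming_dist x x = 0"
  unfolding hamming_dist_def by (induct x) auto

lemma length_gray [simp]: "length (gray a) = 2"
  by (simp add: gray_def)

lemma length_concat_map_gray [simp]: "length (concat (map gray u)) = 2 * length u"
  by (induct u) auto

lemma hamming_dist_gray:
  "a < 4 \<Longrightarrow> b < 4 \<Longrightarrow> hamming_dist (gray a) (gray b) = lee_wt ((a + (4 - b) mod 4) mod 4)"
  by (drule nat_less_4_cases)+ (auto simp: gray_def lee_wt_def hamming_dist_def)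

lemma hamming_dist_concat_map_gray:
  "length u = length w \<Longrightarrow> \<forall>a\<in>set u. a < 4 \<Longrightarrow> \<forall>a\<in>set w. a < 4 \<Longrightarrow>
   hamming_dist (concat (map gray u)) (concat (map gray w)) =
   sum_list (map lee_wt (map2 (\<lambda>a b. (a + b) mod 4) u (map (\<lambda>a. (4 - a) mod 4) w)))"
proof (induct u arbitrary: w)
  case (Cons a u)
  then obtain b w' where "w = b # w'" by (cases w) auto
  with Cons show ?case by (simp add: hamming_dist_append hamming_dist_gray)
qed (simp add: hamming_dist_def)

lemma hamming_dist_binary:
  "length x = length y \<Longrightarrow> \<forall>a\<in>set x. a < 2 \<Longrightarrow> \<forall>a\<in>set y. a < 2 \<Longrightarrow>
   hamming_dist x y = length (filter (\<lambda>a. a \<noteq> 0) (map2 (\<lambda>a b. (a + b) mod 2) x y))"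
proof (induct x arbitrary: y)
  case (Cons a x)
  then obtain b y' where y: "y = b # y'" by (cases y) auto
  with Cons have "a < 2" "b < 2" by auto
  then have "(a \<noteq> b) = ((a + b) mod 2 \<noteq> 0)" by (auto simp: less_Suc_eq)
  with Cons y show ?case by (simp add: hamming_dist_def)
qed (simp add: hamming_dist_def)

lemma hamming_dist_Gray_map:
  "v \<in> z2z4_space \<alpha> \<beta> \<Longrightarrow> w \<in> z2z4_space \<alpha> \<beta> \<Longrightarrow>
   hamming_dist (Gray_map v) (Gray_map w) = z2z4_weight (z2z4_add v (z2z4_neg w))"
  unfolding Gray_map_def z2z4_weight_def z2z4_add_def z2z4_neg_def z2z4_space_def
  by (auto simp: hamming_dist_append hamming_dist_concat_map_gray hamming_dist_binary)

lemma Gray_map_binvecs: "v \<in> z2z4_space \<alpha> \<beta> \<Longrightarrow> Gray_map v \<in> binvecs (\<alpha> + 2 * \<beta>)"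
  unfolding Gray_map_def z2z4_space_def binvecs_def by (auto simp: gray_def)

lemma hamming_dist_eq_0_imp_eq:
  assumes "length x = length y" and "hamming_dist x y = 0"
  shows "x = y"
proof -
  have "{i. i < length x \<and> x!i \<noteq> y!i} = {}"
    using assms hamming_dist_conv_card[of x y] by simp
  with assms(1) show ?thesis by (auto intro: nth_equalityI)
qed

lemma gray_inject: "gray a = gray b \<Longrightarrow> a < 4 \<Longrightarrow> b < 4 \<Longrightarrow> a = b"
  by (drule nat_less_4_cases)+ (auto simp: gray_def)

lemma concat_map_gray_inject:
  "length u = length w \<Longrightarrow> \<forall>a\<in>set u. a < 4 \<Longrightarrow> \<forall>a\<in>set w. a < 4 \<Longrightarrow>
   concat (map gray u) = concat (map gray w) \<Longrightarrow> u = w"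
proof (induct u arbitrary: w)
  case (Cons a u)
  then obtain b w' where w: "w = b # w'" by (cases w) auto
  with Cons have "gray a = gray b" and rest: "concat (map gray u) = concat (map gray w')"
    by (auto simp: append_eq_append_conv)
  moreover have "a < 4" "b < 4" using Cons w by auto
  ultimately have "a = b" using gray_inject by blast
  with Cons w rest show ?case by simp
qed simp

lemma inj_on_Gray_map: "inj_on Gray_map (z2z4_space \<alpha> \<beta>)"
proof
  fix v w assume v: "v \<in> z2z4_space \<alpha> \<beta>" and w: "w \<in> z2z4_space \<alpha> \<beta>"
    and eq: "Gray_map v = Gray_map w"
  have "length (fst v) = length (fst w)" using v w unfolding z2z4_space_def by auto
  with eq have "fst v = fst w" and "concat (map gray (snd v)) = concat (map gray (snd w))"
    unfolding Gray_map_def by auto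
  moreover have "snd v = snd w"
    using concat_map_gray_inject calculation(2) v w unfolding z2z4_space_def by auto
  ultimately show "v = w" by (simp add: prod_eq_iff)
qed

section \<open>Binary 1-perfect codes\<close>

lemma binvecs_eq_lists: "binvecs n = {xs. set xs \<subseteq> {0..<2} \<and> length xs = n}"
  unfolding binvecs_def by auto

lemma finite_binvecs: "finite (binvecs n)"
  unfolding binvecs_eq_lists by (rule finite_lists_length_eq) simp

lemma card_binvecs: "card (binvecs n) = 2 ^ n"
  unfolding binvecs_eq_lists by (subst card_lists_length_eq) simp_all

lemma one_perfect_dist_ge_3:
  assumes P: "one_perfect n B" and a: "a \<in> B" and b: "b \<in> B" and "a \<noteq> b"
  shows "3 \<le> hamming_dist a b"
proof (rule ccontr)
  assume "\<not> 3 \<le> hamming_dist a b"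
  then have d: "hamming_dist a b \<le> 2" by simp
  have av: "a \<in> binvecs n" and bv: "b \<in> binvecs n" using P a b unfolding one_perfect_def by auto
  then have la: "length a = n" and lb: "length b = n" unfolding binvecs_def by auto
  define I where "I = {i. i < n \<and> a!i \<noteq> b!i}"
  have hab: "hamming_dist a b = card I" using hamming_dist_conv_card[of a b] la lb unfolding I_def by simp
  have "I \<noteq> {}"
    using \<open>a \<noteq> b\<close> la lb unfolding I_def by (auto intro: nth_equalityI)
  then obtain i where iI: "i \<in> I" by auto
  then have i: "i < n" "a!i \<noteq> b!i" unfolding I_def by auto
  \<comment> \<open>flipping one coordinate where \<open>a\<close> and \<open>b\<close> differ gives a word within distance 1 of both\<close>
  define y where "y = a[i := b!i]"
  have yv: "y \<in> binvecs n"
    using av bv i la lb set_update_subset_insert[of a i "b!i"] unfolding y_def binvecs_def by auto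
  have "{j. j < length y \<and> y!j \<noteq> a!j} = {i}" using i la unfolding y_def by (auto simp: nth_list_update)
  then have hya: "hamming_dist y a = 1" using hamming_dist_conv_card[of y a] la unfolding y_def by simp
  have "{j. j < length y \<and> y!j \<noteq> b!j} = I - {i}" using i la unfolding y_def I_def
    by (auto simp: nth_list_update)
  then have "hamming_dist y b = card I - 1"
    using hamming_dist_conv_card[of y b] la lb iI unfolding y_def I_def by simp
  with hab d have hyb: "hamming_dist y b \<le> 1" by simp
  from P yv have "\<exists>!c. c \<in> B \<and> hamming_dist y c \<le> 1" unfolding one_perfect_def by auto
  with a b \<open>a \<noteq> b\<close> hya hyb show False by auto
qed

lemma hamming_ball_1_subset:
  assumes x: "x \<in> binvecs n" and b: "b \<in> binvecs n" and d: "hamming_dist x b \<le> 1"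
  shows "x \<in> (\<lambda>i. if i = n then b else b[i := 1 - b!i]) ` {0..n}"
proof -
  have lx: "length x = n" and lb: "length b = n" using x b unfolding binvecs_def by auto
  define I where "I = {i. i < n \<and> x!i \<noteq> b!i}"
  have c: "card I \<le> 1" using d hamming_dist_conv_card[of x b] lx lb unfolding I_def by simp
  show ?thesis
  proof (cases "card I = 0")
    case True
    then have "I = {}" unfolding I_def by simp
    then have "x = b" using lx lb unfolding I_def by (auto intro: nth_equalityI)
    then show ?thesis by (intro image_eqI[of _ _ n]) auto
  next
    case False
    with c obtain i where Ii: "I = {i}" by (auto simp: card_Suc_eq le_Suc_eq)
    then have i: "i < n" "x!i \<noteq> b!i" unfolding I_def by auto
    have "x!i < 2" "b!i < 2" using x b i lx lb unfolding binvecs_def by (auto simp: nth_mem)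
    with i have xi: "x!i = 1 - b!i" by auto
    have "x = b[i := 1 - b!i]"
    proof (rule nth_equalityI)
      fix j assume "j < length x"
      with Ii xi lx lb show "x ! j = b[i := 1 - b ! i] ! j"
        unfolding I_def by (cases "j = i") auto
    qed (use lx lb in simp)
    with i show ?thesis by (intro image_eqI[of _ _ i]) auto
  qed
qed

lemma covering_radius_1_card_bound:
  assumes sub: "B \<subseteq> binvecs n" and cov: "\<forall>x\<in>binvecs n. \<exists>b\<in>B. hamming_dist x b \<le> 1"
  shows "2 ^ n \<le> card B * (n + 1)"
proof -
  have fB: "finite B" using sub finite_binvecs finite_subset by blast
  let ?ball = "\<lambda>b. (\<lambda>i. if i = n then b else b[i := 1 - b!i]) ` {0..n}"
  have "binvecs n \<subseteq> (\<Union>b\<in>B. ?ball b)"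
  proof
    fix x assume x: "x \<in> binvecs n"
    then obtain b where "b \<in> B" "hamming_dist x b \<le> 1" using cov by auto
    then show "x \<in> (\<Union>b\<in>B. ?ball b)" using hamming_ball_1_subset[OF x] sub by blast
  qed
  then have "card (binvecs n) \<le> card (\<Union>b\<in>B. ?ball b)"
    by (intro card_mono) (auto simp: fB)
  also have "\<dots> \<le> (\<Sum>b\<in>B. card (?ball b))" by (rule card_UN_le[OF fB])
  also have "\<dots> \<le> (\<Sum>b\<in>B. n + 1)" by (intro sum_mono order.trans[OF card_image_le]) auto
  finally show ?thesis by (simp add: card_binvecs)
qed

lemma length_filter_nonzero_binary:
  "\<forall>a\<in>set (x::nat list). a < 2 \<Longrightarrow> length (filter (\<lambda>a. a \<noteq> 0) x) = sum_list x"
proof (induct x)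
  case (Cons a x)
  then have "a = 0 \<or> a = 1" by auto
  with Cons show ?case by auto
qed simp

lemma z2z4_weight_binary:
  assumes "\<forall>a\<in>set u. a < 2"
  shows "z2z4_weight (u, w) = sum_list u + sum_list (map lee_wt w)"
  using length_filter_nonzero_binary[OF assms] unfolding z2z4_weight_def by simp

lemma sum_list_mod_cong:
  fixes f g :: "'a \<Rightarrow> nat"
  shows "(\<And>x. x \<in> set xs \<Longrightarrow> f x mod m = g x mod m) \<Longrightarrow>
    sum_list (map f xs) mod m = sum_list (map g xs) mod m"
proof (induct xs)
  case (Cons x xs)
  then show ?case using mod_add_cong[of "f x" m "g x"] by simp
qed simp

lemma sum_list_map2_mod_even:
  assumes "even (m::nat)" and "length x = length y"
  shows "sum_list (map2 (\<lambda>a b. (a + b) mod m) x y) mod 2 = (sum_list x + sum_list y) mod 2"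
  using assms(2)
proof (induct x arbitrary: y)
  case (Cons a x)
  then obtain c y' where y: "y = c # y'" by (cases y) auto
  have "(a + c) mod m mod 2 = (a + c) mod 2" using assms(1) by (simp add: mod_mod_cancel)
  from mod_add_cong[OF this Cons(1)] Cons(2) y show ?case by (simp add: algebra_simps)
qed simp

lemma z2z4_weight_mod_2:
  assumes "v \<in> z2z4_space \<alpha> \<beta>"
  shows "z2z4_weight v mod 2 = (sum_list (fst v) + sum_list (snd v)) mod 2"
proof -
  obtain u w where v: "v = (u, w)" and u: "\<forall>a\<in>set u. a < 2" and w: "\<forall>a\<in>set w. a < 4"
    using assms unfolding z2z4_space_def by auto
  have "lee_wt a mod 2 = a mod 2" if "a \<in> set w" for a
    using w that by (auto dest!: nat_less_4_cases simp: lee_wt_def)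
  then have "sum_list (map lee_wt w) mod 2 = sum_list (map (\<lambda>a. a) w) mod 2"
    by (rule sum_list_mod_cong)
  then have "(sum_list u + sum_list (map lee_wt w)) mod 2 = (sum_list u + sum_list w) mod 2"
    using mod_add_cong[OF refl] by simp
  then show ?thesis using z2z4_weight_binary[OF u, of w] v by simp
qed

lemma z2z4_space_add: "v \<in> z2z4_space \<alpha> \<beta> \<Longrightarrow> w \<in> z2z4_space \<alpha> \<beta> \<Longrightarrow> z2z4_add v w \<in> z2z4_space \<alpha> \<beta>"
  unfolding z2z4_add_def z2z4_space_def by (auto simp: set_zip)

lemma z2z4_space_neg: "v \<in> z2z4_space \<alpha> \<beta> \<Longrightarrow> z2z4_neg v \<in> z2z4_space \<alpha> \<beta>"
  unfolding z2z4_neg_def z2z4_space_def by auto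

lemma z2z4_space_zero [simp]: "z2z4_zero \<alpha> \<beta> \<in> z2z4_space \<alpha> \<beta>"
  unfolding z2z4_zero_def z2z4_space_def by auto

lemma z2z4_weight_zero [simp]: "z2z4_weight (z2z4_zero \<alpha> \<beta>) = 0"
  unfolding z2z4_zero_def z2z4_weight_def by (simp add: lee_wt_def)

lemma z2z4_neg_zero [simp]: "z2z4_neg (z2z4_zero \<alpha> \<beta>) = z2z4_zero \<alpha> \<beta>"
  unfolding z2z4_neg_def z2z4_zero_def by simp

lemma z2z4_add_zero_right: "v \<in> z2z4_space \<alpha> \<beta> \<Longrightarrow> z2z4_add v (z2z4_zero \<alpha> \<beta>) = v"
  unfolding z2z4_add_def z2z4_zero_def z2z4_space_def
  by (auto intro!: nth_equalityI simp: prod_eq_iff nth_mem)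

lemma z2z4_weight_add_mod_2:
  assumes v: "v \<in> z2z4_space \<alpha> \<beta>" and w: "w \<in> z2z4_space \<alpha> \<beta>"
  shows "z2z4_weight (z2z4_add v w) mod 2 = (z2z4_weight v + z2z4_weight w) mod 2"
proof -
  have "length (fst v) = length (fst w)" "length (snd v) = length (snd w)"
    using v w unfolding z2z4_space_def by auto
  then have f: "sum_list (fst (z2z4_add v w)) mod 2 = (sum_list (fst v) + sum_list (fst w)) mod 2"
    and s: "sum_list (snd (z2z4_add v w)) mod 2 = (sum_list (snd v) + sum_list (snd w)) mod 2"
    unfolding z2z4_add_def by (simp_all add: sum_list_map2_mod_even)
  have "z2z4_weight (z2z4_add v w) mod 2 =
      ((sum_list (fst v) + sum_list (fst w)) + (sum_list (snd v) + sum_list (snd w))) mod 2"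
    using z2z4_weight_mod_2[OF z2z4_space_add[OF v w]] mod_add_cong[OF f s] by simp
  also have "\<dots> = ((sum_list (fst v) + sum_list (snd v)) + (sum_list (fst w) + sum_list (snd w))) mod 2"
    by (simp add: algebra_simps)
  also have "\<dots> = (z2z4_weight v + z2z4_weight w) mod 2"
    using mod_add_cong[OF z2z4_weight_mod_2[OF v, symmetric] z2z4_weight_mod_2[OF w, symmetric]] .
  finally show ?thesis .
qed

lemma sum_list_neg_mod_2:
  "\<forall>a\<in>set (u::nat list). a < 4 \<Longrightarrow> sum_list (map (\<lambda>a. (4 - a) mod 4) u) mod 2 = sum_list u mod 2"
proof -
  assume "\<forall>a\<in>set u. a < 4"
  then have "(4 - a) mod 4 mod 2 = a mod 2" if "a \<in> set u" for a
    using that by (auto dest!: nat_less_4_cases)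
  from sum_list_mod_cong[of u _ 2 "\<lambda>a. a", OF this] show ?thesis by simp
qed

lemma z2z4_weight_neg_mod_2:
  assumes "v \<in> z2z4_space \<alpha> \<beta>"
  shows "z2z4_weight (z2z4_neg v) mod 2 = z2z4_weight v mod 2"
  using z2z4_weight_mod_2[OF z2z4_space_neg[OF assms]] z2z4_weight_mod_2[OF assms]
    sum_list_neg_mod_2[of "snd v"] assms
  unfolding z2z4_neg_def z2z4_space_def by (auto intro: mod_add_cong)

lemma parity_extend_space:
  "v \<in> z2z4_space \<alpha> \<beta> \<Longrightarrow> p \<le> \<alpha> \<Longrightarrow> parity_extend p v \<in> z2z4_space (Suc \<alpha>) \<beta>"
  unfolding parity_extend_def z2z4_space_def by (auto dest: in_set_takeD in_set_dropD)

lemma parity_extend_add: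
  assumes v: "v \<in> z2z4_space \<alpha> \<beta>" and w: "w \<in> z2z4_space \<alpha> \<beta>" and "p \<le> \<alpha>"
  shows "parity_extend p (z2z4_add v w) = z2z4_add (parity_extend p v) (parity_extend p w)"
proof -
  have "length (fst v) = length (fst w)" "p \<le> length (fst v)"
    using assms unfolding z2z4_space_def by auto
  moreover have "z2z4_weight (z2z4_add v w) mod 2 = (z2z4_weight v mod 2 + z2z4_weight w mod 2) mod 2"
    using z2z4_weight_add_mod_2[OF v w] by (simp add: mod_add_eq)
  ultimately show ?thesis unfolding parity_extend_def z2z4_add_def
    by (simp add: take_zip drop_zip zip_append take_map drop_map)
qed

lemma parity_extend_neg:
  "v \<in> z2z4_space \<alpha> \<beta> \<Longrightarrow> parity_extend p (z2z4_neg v) = z2z4_neg (parity_extend p v)"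
  using z2z4_weight_neg_mod_2[of v] unfolding parity_extend_def z2z4_neg_def by auto

lemma sum_list_insert_at: "sum_list (take p u @ c # drop p u) = sum_list u + (c::nat)"
  by (subst append_take_drop_id[of p u, symmetric], simp only: sum_list_append) simp

lemma odd_add_parity: "odd (b::nat) \<Longrightarrow> odd (a + (a + b) mod 2)"
  by (cases "even a") (auto simp: odd_iff_mod_2_eq_one mod_add_eq[symmetric])

lemma lee_wt_pos: "a \<noteq> 0 \<Longrightarrow> 1 \<le> lee_wt a"
  by (simp add: lee_wt_def)

lemma lee_wt_neg: "(a::nat) < 4 \<Longrightarrow> lee_wt ((4 - a) mod 4) = lee_wt a"
  by (auto dest!: nat_less_4_cases simp: lee_wt_def)

lemma lee_wt_double_le: "(a::nat) < 4 \<Longrightarrow> lee_wt ((a + a) mod 4) \<le> 2 * lee_wt a"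
  by (auto dest!: nat_less_4_cases simp: lee_wt_def)

lemma lee_wt_double: "(a::nat) < 4 \<Longrightarrow> lee_wt a = 1 \<Longrightarrow> lee_wt ((a + a) mod 4) = 2"
  by (auto dest!: nat_less_4_cases simp: lee_wt_def)

lemma sum_list_lee_wt_neg:
  "\<forall>a\<in>set w. a < 4 \<Longrightarrow> sum_list (map lee_wt (map (\<lambda>a. (4 - a) mod 4) w)) = sum_list (map lee_wt w)"
  by (induct w) (auto simp: lee_wt_neg)

lemma sum_list_lee_wt_double_le:
  "\<forall>a\<in>set w. a < 4 \<Longrightarrow> sum_list (map lee_wt (map (\<lambda>a. (a + a) mod 4) w)) \<le> 2 * sum_list (map lee_wt w)"
  by (induct w) (auto intro: add_mono lee_wt_double_le)

lemma cshift_eq_rotate: "cshift xs = rotate (length xs - 1) xs"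
proof (cases "xs = []")
  case False
  show ?thesis
  proof (rule nth_equalityI)
    fix i assume i: "i < length (cshift xs)"
    with False have i': "i < length xs" by (simp add: cshift_def)
    show "cshift xs ! i = rotate (length xs - 1) xs ! i"
    proof (cases i)
      case 0
      with False i' show ?thesis by (simp add: cshift_def nth_rotate last_conv_nth)
    next
      case (Suc j)
      then have "length xs - 1 + i = length xs + j" using i' by simp
      with i' Suc have "(length xs - 1 + i) mod length xs = j" by simp
      with False i' Suc show ?thesis by (simp add: cshift_def nth_rotate nth_butlast)
    qed
  qed (use False in \<open>simp add: cshift_def\<close>)
qed (simp add: cshift_def)

lemma funpow_z2z4_sigma:
  "(z2z4_sigma ^^ k) v =
     (rotate (k * (length (fst v) - 1)) (fst v), rotate (k * (length (snd v) - 1)) (snd v))"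
proof (induct k)
  case (Suc k)
  have "\<And>n. n - 1 + k * (n - 1) = Suc k * (n - 1)" by simp
  with Suc show ?case
    by (simp only: funpow.simps comp_apply z2z4_sigma_def cshift_eq_rotate rotate_rotate
        length_rotate fst_conv snd_conv)
qed simp

lemma z2z4_cyclic_funpow: "z2z4_cyclic D \<Longrightarrow> v \<in> D \<Longrightarrow> (z2z4_sigma ^^ k) v \<in> D"
  unfolding z2z4_cyclic_def by (induct k) auto

lemma rotate_replicate: "rotate n (replicate m a) = replicate m a"
  unfolding rotate_def by (induct n) simp_all

lemma mod_square_pred: "2 \<le> (n::nat) \<Longrightarrow> ((n - 1) * (n - 1)) mod n = 1"
proof -
  assume "2 \<le> n"
  then obtain m where m: "n = m + 2" by (metis add.commute le_Suc_ex)
  then have "(n - 1) * (n - 1) = 1 + m * n" by (simp add: algebra_simps)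
  moreover have "(1 + m * n) mod n = 1" using m mod_mult_self1[of 1 m n] by simp
  ultimately show ?thesis by simp
qed

section \<open>Binary words as elements of \<open>\<int>\<^sub>2[X]/(X\<^sup>n - 1)\<close>\<close>

definition bin_add :: "nat list \<Rightarrow> nat list \<Rightarrow> nat list" where
  "bin_add x y = map2 (\<lambda>a b. (a + b) mod 2) x y"

text \<open>Multiplication by \<open>1 + X\<^sup>-\<^sup>m\<close>.\<close>
definition bin_add_rotate :: "nat \<Rightarrow> nat list \<Rightarrow> nat list" where
  "bin_add_rotate m x = bin_add x (rotate m x)"

lemma binvecsD: "x \<in> binvecs n \<Longrightarrow> length x = n \<and> (\<forall>i<n. x!i < 2)"
  unfolding binvecs_def by (auto simp: nth_mem)

lemma binvecsI: "length x = n \<Longrightarrow> (\<forall>i<n. x!i < 2) \<Longrightarrow> x \<in> binvecs n"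
  unfolding binvecs_def by (auto simp: in_set_conv_nth)

lemma length_bin_add [simp]: "length (bin_add x y) = min (length x) (length y)"
  unfolding bin_add_def by simp

lemma nth_bin_add: "i < length x \<Longrightarrow> i < length y \<Longrightarrow> bin_add x y ! i = (x!i + y!i) mod 2"
  unfolding bin_add_def by simp

lemma bin_add_binvecs: "x \<in> binvecs n \<Longrightarrow> y \<in> binvecs n \<Longrightarrow> bin_add x y \<in> binvecs n"
  by (rule binvecsI) (auto dest!: binvecsD simp: nth_bin_add)

lemma bin_add_comm: "bin_add x y = bin_add y x"
  unfolding bin_add_def by (intro nth_equalityI) (auto simp: add.commute)

lemma bin_add_cancel:
  assumes x: "x \<in> binvecs n" and y: "y \<in> binvecs n"
  shows "bin_add (bin_add x y) y = x"
proof (rule nth_equalityI)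
  fix i assume "i < length (bin_add (bin_add x y) y)"
  with x y have i: "i < n" and "x!i < 2" "y!i < 2" by (auto dest!: binvecsD)
  then have "x!i = 0 \<or> x!i = 1" "y!i = 0 \<or> y!i = 1" by auto
  with x y i show "bin_add (bin_add x y) y ! i = x ! i" by (auto dest!: binvecsD simp: nth_bin_add)
qed (use x y in \<open>auto dest!: binvecsD\<close>)

lemma length_bin_add_rotate [simp]: "length (bin_add_rotate m x) = length x"
  unfolding bin_add_rotate_def by simp

lemma bin_add_rotate_binvecs: "x \<in> binvecs n \<Longrightarrow> bin_add_rotate m x \<in> binvecs n"
  unfolding bin_add_rotate_def binvecs_def bin_add_def by (auto simp: set_zip)

lemma nth_bin_add_rotate:
  "x \<in> binvecs n \<Longrightarrow> i < n \<Longrightarrow> bin_add_rotate m x ! i = (x!i + x!((m + i) mod n)) mod 2"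
  unfolding bin_add_rotate_def by (auto dest!: binvecsD simp: nth_bin_add nth_rotate)

lemma mod_2_add_twice: "((a + b) mod 2 + (b + c) mod 2) mod 2 = ((a::nat) + c) mod 2"
proof -
  have "((a + b) mod 2 + (b + c) mod 2) mod 2 = ((a + b) + (b + c)) mod 2" by (simp add: mod_add_eq)
  also have "(a + b) + (b + c) = (a + c) + 2 * b" by simp
  finally show ?thesis by simp
qed

lemma mod_2_add_swap:
  "((a + b) mod 2 + (c + d) mod 2) mod 2 = (((a::nat) + c) mod 2 + (b + d) mod 2) mod 2"
  by (simp add: mod_add_eq add.assoc add.left_commute)

lemma bin_add_rotate_twice:
  assumes x: "x \<in> binvecs n"
  shows "bin_add_rotate m (bin_add_rotate m x) = bin_add_rotate (2 * m) x"
proof (rule nth_equalityI)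
  have y: "bin_add_rotate m x \<in> binvecs n" using bin_add_rotate_binvecs[OF x] .
  show "length (bin_add_rotate m (bin_add_rotate m x)) = length (bin_add_rotate (2 * m) x)"
    by simp
  fix i assume "i < length (bin_add_rotate m (bin_add_rotate m x))"
  then have i: "i < n" using x by (auto dest!: binvecsD)
  then have j: "(m + i) mod n < n" by simp
  have "(m + (m + i) mod n) mod n = (2 * m + i) mod n" by (simp add: mod_add_right_eq mult_2 add.assoc)
  then show "bin_add_rotate m (bin_add_rotate m x) ! i = bin_add_rotate (2 * m) x ! i"
    using nth_bin_add_rotate[OF y i] nth_bin_add_rotate[OF x i] nth_bin_add_rotate[OF x j]
    by (simp add: mod_2_add_twice)
qed

lemma bin_add_rotate_bin_add:
  assumes x: "x \<in> binvecs n" and y: "y \<in> binvecs n"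
  shows "bin_add_rotate m (bin_add x y) = bin_add (bin_add_rotate m x) (bin_add_rotate m y)"
proof (rule nth_equalityI)
  have xy: "bin_add x y \<in> binvecs n" using bin_add_binvecs[OF x y] .
  show "length (bin_add_rotate m (bin_add x y)) = length (bin_add (bin_add_rotate m x) (bin_add_rotate m y))"
    by simp
  fix i assume "i < length (bin_add_rotate m (bin_add x y))"
  then have i: "i < n" using xy by (auto dest!: binvecsD)
  then have j: "(m + i) mod n < n" by simp
  have "length x = n" "length y = n" using x y by (auto dest!: binvecsD)
  with i j show "bin_add_rotate m (bin_add x y) ! i = bin_add (bin_add_rotate m x) (bin_add_rotate m y) ! i"
    using nth_bin_add_rotate[OF xy i] nth_bin_add_rotate[OF x i] nth_bin_add_rotate[OF y i]
      nth_bin_add[of i] nth_bin_add[of "(m + i) mod n" x y]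
    by (simp add: mod_2_add_swap)
qed

text \<open>The Frobenius identity \<open>(1 + X)\<^bsup>2\<^sup>j\<^esup> = 1 + X\<^bsup>2\<^sup>j\<^esup>\<close> over \<open>\<int>\<^sub>2\<close>.\<close>
lemma funpow_bin_add_rotate_1:
  "x \<in> binvecs n \<Longrightarrow> (bin_add_rotate 1 ^^ (2 ^ j)) x = bin_add_rotate (2 ^ j) x"
proof (induct j arbitrary: x)
  case (Suc j)
  have "(2::nat) ^ Suc j = 2 ^ j + 2 ^ j" by simp
  then have "(bin_add_rotate 1 ^^ (2 ^ Suc j)) x = (bin_add_rotate 1 ^^ (2 ^ j)) ((bin_add_rotate 1 ^^ (2 ^ j)) x)"
    by (simp only: funpow_add comp_apply)
  also have "\<dots> = bin_add_rotate (2 ^ j) (bin_add_rotate (2 ^ j) x)"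
    using Suc bin_add_rotate_binvecs by simp
  also have "\<dots> = bin_add_rotate (2 ^ Suc j) x" using bin_add_rotate_twice[OF Suc(2)] by simp
  finally show ?case .
qed simp

lemma bin_add_rotate_length_eq_zero: "x \<in> binvecs n \<Longrightarrow> bin_add_rotate n x = replicate n 0"
  by (intro nth_equalityI) (auto dest!: binvecsD simp: bin_add_rotate_def nth_bin_add nth_rotate)

lemma z4_add_neg: "(a::nat) < 4 \<Longrightarrow> (a + (4 - a) mod 4) mod 4 = 0"
  by (auto dest!: nat_less_4_cases)

lemma z2z4_add_neg_same_Z4:
  "\<forall>a\<in>set w. a < 4 \<Longrightarrow> z2z4_add (x, w) (z2z4_neg (y, w)) = (bin_add x y, replicate (length w) 0)"
  unfolding z2z4_add_def z2z4_neg_def bin_add_def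
  by (auto intro!: nth_equalityI simp: z4_add_neg nth_mem)

lemma z2z4_add_same_neg_Z4:
  "\<forall>a\<in>set w. a < 4 \<Longrightarrow>
   z2z4_add (x, map (\<lambda>a. (4 - a) mod 4) w) (y, w) = (bin_add x y, replicate (length w) 0)"
  unfolding z2z4_add_def bin_add_def
  by (auto intro!: nth_equalityI simp: z4_add_neg nth_mem add.commute)

lemma unit_binvecs: "0 < n \<Longrightarrow> 1 # replicate (n - 1) 0 \<in> binvecs n"
  unfolding binvecs_def by auto

lemma sum_list_bin_add_rotate_unit:
  assumes m: "0 < m" "n = 2 * m"
  shows "sum_list (bin_add_rotate m (1 # replicate (n - 1) 0)) = 2"
proof -
  let ?e = "1 # replicate (n - 1) (0::nat)"
  have e: "?e \<in> binvecs n" using m by (intro unit_binvecs) simp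
  have e_nth: "\<And>j. j < n \<Longrightarrow> ?e ! j = (if j = 0 then 1 else 0)" by (simp add: nth_Cons')
  have "(m + i) mod n = 0 \<longleftrightarrow> i = m" if "i < n" for i
  proof (cases "m + i < n")
    case False
    then have "(m + i) mod n = m + i - n" using that m by (simp add: le_mod_geq)
    with False that m show ?thesis by auto
  qed (use m in auto)
  then have nz: "bin_add_rotate m ?e ! i \<noteq> 0 \<longleftrightarrow> i = 0 \<or> i = m" if "i < n" for i
    using that nth_bin_add_rotate[OF e that, of m] e_nth[OF that] e_nth[of "(m + i) mod n"] m by auto
  have "\<forall>a\<in>set (bin_add_rotate m ?e). a < 2" using bin_add_rotate_binvecs[OF e] unfolding binvecs_def by auto
  then have "sum_list (bin_add_rotate m ?e) = card {i. i < n \<and> bin_add_rotate m ?e ! i \<noteq> 0}"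
    using length_filter_nonzero_binary[symmetric] e unfolding binvecs_def
    by (simp add: length_filter_conv_card)
  also have "{i. i < n \<and> bin_add_rotate m ?e ! i \<noteq> 0} = {0, m}" using nz m by auto
  finally show ?thesis using m by simp
qed

lemma two_pow_pred_ge: "3 \<le> r \<Longrightarrow> r + 1 \<le> (2::nat) ^ (r - 1)"
proof (induct r rule: dec_induct)
  case (step n)
  then have "(2::nat) ^ (Suc n - 1) = 2 * 2 ^ (n - 1)" by (cases n) auto
  with step show ?case by simp
qed simp

lemma binvecs_4_cases:
  assumes "x \<in> binvecs 4"
  obtains x0 x1 x2 x3 where "x = [x0, x1, x2, x3]"
    and "x0 = 0 \<or> x0 = 1" "x1 = 0 \<or> x1 = 1" "x2 = 0 \<or> x2 = 1" "x3 = 0 \<or> x3 = 1"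
proof -
  have "length x = 4" and x2: "\<forall>a\<in>set x. a < 2" using assms unfolding binvecs_def by auto
  then obtain x0 x1 x2 x3 where "x = [x0, x1, x2, x3]" by (auto simp: numeral_eq_Suc length_Suc_conv)
  with x2 show ?thesis by (intro that) (auto simp: less_2_cases_iff)
qed

lemma rotate_length_4:
  "rotate 1 [a, b, c, d] = [b, c, d, a]" "rotate 2 [a, b, c, d] = [c, d, a, b]"
  "rotate 3 [a, b, c, d] = [d, a, b, c]"
  by (simp_all add: rotate_def numeral_eq_Suc)

lemma sum_list_bin_add_rotate_2_odd:
  "x \<in> binvecs 4 \<Longrightarrow> odd (sum_list x) \<Longrightarrow> sum_list (bin_add_rotate 2 x) = 2"
  by (erule binvecs_4_cases, elim disjE) (simp_all add: bin_add_rotate_def bin_add_def rotate_length_4)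

lemma alternating_of_bin_add_rotate_odd:
  "x \<in> binvecs 4 \<Longrightarrow> sum_list x = 2 \<Longrightarrow> k = 1 \<or> k = 3 \<Longrightarrow> sum_list (bin_add_rotate k x) \<noteq> 2 \<Longrightarrow>
   x = [1, 0, 1, 0] \<or> x = [0, 1, 0, 1]"
  by (erule binvecs_4_cases, elim disjE) (simp_all add: bin_add_rotate_def bin_add_def rotate_length_4)

lemma alternating_eq:
  "x = [1, 0, 1, 0] \<or> x = [0, 1, 0, 1] \<Longrightarrow> y = [1, 0, 1, 0] \<or> y = [0, 1, 0, 1] \<Longrightarrow>
   (p::nat) < 4 \<Longrightarrow> x ! p = 1 \<Longrightarrow> y ! p = 1 \<Longrightarrow> x = y"
  by (drule nat_less_4_cases) auto

section \<open>Doubling chains\<close>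

text \<open>The model is \<open>V = \<int>\<^sub>2\<^sup>n\<close> with a linear map \<open>T\<close> that is nilpotent modulo an invariant
subspace \<open>M\<close>; of the group structure only commutativity and \<open>x + y + y = x\<close> are needed.\<close>
locale nilpotent_modulo_subgroup =
  fixes V M :: "'a set" and f :: "'a \<Rightarrow> 'a \<Rightarrow> 'a" and T :: "'a \<Rightarrow> 'a" and K :: nat
  assumes finite_V: "finite V" and M_subset: "M \<subseteq> V"
    and f_closed: "\<And>x y. x \<in> V \<Longrightarrow> y \<in> V \<Longrightarrow> f x y \<in> V"
    and f_comm: "\<And>x y. f x y = f y x"
    and f_cancel: "\<And>x y. x \<in> V \<Longrightarrow> y \<in> V \<Longrightarrow> f (f x y) y = x"
    and M_closed: "\<And>x y. x \<in> M \<Longrightarrow> y \<in> M \<Longrightarrow> f x y \<in> M"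
    and T_closed: "\<And>x. x \<in> V \<Longrightarrow> T x \<in> V"
    and T_add: "\<And>x y. x \<in> V \<Longrightarrow> y \<in> V \<Longrightarrow> T (f x y) = f (T x) (T y)"
    and T_M: "\<And>x. x \<in> M \<Longrightarrow> T x \<in> M"
    and nilpotent: "\<And>x. x \<in> V \<Longrightarrow> (T ^^ K) x \<in> M"
begin

lemma card_double_of_psubset:
  assumes AB: "A \<subset> B" and BV: "B \<subseteq> V"
    and fA: "\<And>x y. x \<in> A \<Longrightarrow> y \<in> A \<Longrightarrow> f x y \<in> A"
    and fB: "\<And>x y. x \<in> B \<Longrightarrow> y \<in> B \<Longrightarrow> f x y \<in> B"
  shows "2 * card A \<le> card B"
proof -
  obtain a where a: "a \<in> B" "a \<notin> A" using AB by auto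
  have AV: "A \<subseteq> V" using AB BV by auto
  have finA: "finite A" and finB: "finite B" using AV BV finite_V finite_subset by blast+
  \<comment> \<open>the coset \<open>f a ` A\<close> is disjoint from \<open>A\<close> and has the same size\<close>
  have disj: "A \<inter> f a ` A = {}"
  proof (rule ccontr)
    assume "A \<inter> f a ` A \<noteq> {}"
    then obtain s where s: "s \<in> A" "f a s \<in> A" by auto
    then have "f (f a s) s \<in> A" using fA by blast
    moreover have "f (f a s) s = a" using f_cancel[of a s] a s AV BV by auto
    ultimately show False using a by simp
  qed
  have inj: "inj_on (f a) A"
  proof
    fix s s' assume s: "s \<in> A" "s' \<in> A" "f a s = f a s'"
    then have "s = f (f a s') a" using f_cancel[of s a] f_comm a AV BV by auto
    also have "\<dots> = s'" using f_cancel[of s' a] f_comm a s AV BV by auto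
    finally show "s = s'" .
  qed
  have "2 * card A = card (A \<union> f a ` A)"
    using disj finA card_image[OF inj] by (simp add: card_Un_disjoint)
  also have "\<dots> \<le> card B" using AB a fB by (intro card_mono[OF finB]) auto
  finally show ?thesis .
qed

definition preimage :: "nat \<Rightarrow> 'a set" where
  "preimage k = {x \<in> V. (T ^^ k) x \<in> M}"

lemma funpow_T_closed: "x \<in> V \<Longrightarrow> (T ^^ k) x \<in> V"
  by (induct k) (auto intro: T_closed)

lemma preimage_subset: "preimage k \<subseteq> V"
  unfolding preimage_def by auto

lemma preimage_closed: "x \<in> preimage k \<Longrightarrow> y \<in> preimage k \<Longrightarrow> f x y \<in> preimage k"
proof -
  have "(T ^^ k) (f x y) = f ((T ^^ k) x) ((T ^^ k) y)" if "x \<in> V" "y \<in> V" for x y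
    using that by (induct k) (auto simp: T_add funpow_T_closed)
  then show "x \<in> preimage k \<Longrightarrow> y \<in> preimage k \<Longrightarrow> f x y \<in> preimage k"
    unfolding preimage_def using M_closed f_closed by auto
qed

lemma preimage_0: "preimage 0 = M"
  unfolding preimage_def using M_subset by auto

lemma preimage_Suc: "preimage (Suc k) = {x \<in> V. T x \<in> preimage k}"
  unfolding preimage_def using T_closed by (auto simp: funpow_Suc_right simp del: funpow.simps)

lemma preimage_mono: "preimage k \<subseteq> preimage (Suc k)"
  unfolding preimage_def using T_M by auto

lemma preimage_eventually_full: "preimage (k + K) = V"
  unfolding preimage_def
  using nilpotent[OF funpow_T_closed] by (auto simp: funpow_add add.commute[of k])

lemma preimage_stable:
  assumes "preimage (Suc k) = preimage k"
  shows "preimage (k + j) = preimage k"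
proof (induct j)
  case (Suc j)
  have "preimage (Suc (k + i)) = preimage (k + i)" for i
    by (induct i) (simp_all add: assms preimage_Suc[of "Suc (k + _)"] preimage_Suc[of "k + _"])
  with Suc show ?case by simp
qed simp

text \<open>Each strict step of the chain at least doubles the size, and the chain stops growing
only once it reaches \<open>V\<close>.\<close>
lemma preimage_card: "preimage k = V \<or> 2 ^ k * card M \<le> card (preimage k)"
proof (induct k)
  case 0
  show ?case by (simp add: preimage_0)
next
  case (Suc k)
  show ?case
  proof (cases "preimage (Suc k) = V")
    case False
    then have nk: "preimage k \<noteq> V" using preimage_mono[of k] preimage_subset[of "Suc k"] by auto
    with Suc have ck: "2 ^ k * card M \<le> card (preimage k)" by simp
    have "preimage (Suc k) \<noteq> preimage k"
      using preimage_stable[of k K] preimage_eventually_full[of k] nk by auto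
    with preimage_mono[of k] have "preimage k \<subset> preimage (Suc k)" by auto
    then have "2 * card (preimage k) \<le> card (preimage (Suc k))"
      by (rule card_double_of_psubset[OF _ preimage_subset preimage_closed preimage_closed])
    with ck show ?thesis by simp
  qed simp
qed

lemma preimage_eq_space:
  assumes "card V \<le> 2 ^ k * card M"
  shows "preimage k = V"
proof (rule ccontr)
  assume ne: "preimage k \<noteq> V"
  then have "card (preimage k) < card V"
    using preimage_subset by (intro psubset_card_mono[OF finite_V]) auto
  with ne preimage_card[of k] assms show False by simp
qed

end

locale z2z4_perfect_code =
  fixes \<alpha> \<beta> :: nat and C :: "z2z4vec set"
  assumes one_perfect: "z2z4_one_perfect \<alpha> \<beta> C"
begin

lemma code_subset_space: "v \<in> C \<Longrightarrow> v \<in> z2z4_space \<alpha> \<beta>"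
  and zero_mem: "z2z4_zero \<alpha> \<beta> \<in> C"
  and add_mem: "v \<in> C \<Longrightarrow> w \<in> C \<Longrightarrow> z2z4_add v w \<in> C"
  and neg_mem: "v \<in> C \<Longrightarrow> z2z4_neg v \<in> C"
  using one_perfect unfolding z2z4_one_perfect_def z2z4_additive_def by auto

lemma Gray_image_one_perfect: "one_perfect (\<alpha> + 2 * \<beta>) (Gray_map ` C)"
  using one_perfect unfolding z2z4_one_perfect_def by simp

lemma min_weight:
  assumes v: "v \<in> C" and nz: "z2z4_weight v \<noteq> 0"
  shows "3 \<le> z2z4_weight v"
proof -
  have vs: "v \<in> z2z4_space \<alpha> \<beta>" using code_subset_space[OF v] .
  have d: "hamming_dist (Gray_map v) (Gray_map (z2z4_zero \<alpha> \<beta>)) = z2z4_weight v"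
    using hamming_dist_Gray_map[OF vs z2z4_space_zero] z2z4_add_zero_right[OF vs] by simp
  with nz have "Gray_map v \<noteq> Gray_map (z2z4_zero \<alpha> \<beta>)" by auto
  then have "3 \<le> hamming_dist (Gray_map v) (Gray_map (z2z4_zero \<alpha> \<beta>))"
    using one_perfect_dist_ge_3[OF Gray_image_one_perfect] v zero_mem by blast
  with d show ?thesis by simp
qed

lemma covering:
  assumes v: "v \<in> z2z4_space \<alpha> \<beta>"
  obtains c where "c \<in> C" "z2z4_weight (z2z4_add v (z2z4_neg c)) \<le> 1"
proof -
  obtain c where "c \<in> C" "hamming_dist (Gray_map v) (Gray_map c) \<le> 1"
    using Gray_image_one_perfect Gray_map_binvecs[OF v] unfolding one_perfect_def by blast
  with that show ?thesis using hamming_dist_Gray_map[OF v code_subset_space] by auto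
qed

lemma eq_of_weight_diff_eq_0:
  assumes "v \<in> z2z4_space \<alpha> \<beta>" "c \<in> C" "z2z4_weight (z2z4_add v (z2z4_neg c)) = 0"
  shows "v = c"
proof -
  have cs: "c \<in> z2z4_space \<alpha> \<beta>" using code_subset_space[OF assms(2)] .
  have "length (Gray_map v) = length (Gray_map c)"
    using Gray_map_binvecs[OF assms(1)] Gray_map_binvecs[OF cs] unfolding binvecs_def by simp
  then have "Gray_map v = Gray_map c"
    using hamming_dist_eq_0_imp_eq hamming_dist_Gray_map[OF assms(1) cs] assms(3) by simp
  then show ?thesis using inj_on_Gray_map assms(1) cs by (auto dest: inj_onD)
qed

lemma Z4_part_eq_0_of_Lee_weight_le_1:
  assumes c: "c \<in> C" and le: "sum_list (map lee_wt (snd c)) \<le> 1"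
  shows "snd c = replicate \<beta> 0"
proof (rule ccontr)
  obtain u w where uw: "c = (u, w)" by (cases c)
  have lw: "length w = \<beta>" and w4: "\<forall>a\<in>set w. a < 4"
    using code_subset_space[OF c] uw unfolding z2z4_space_def by auto
  assume "snd c \<noteq> replicate \<beta> 0"
  then obtain j where j: "j < \<beta>" "w ! j \<noteq> 0"
    using lw uw by (metis nth_equalityI length_replicate nth_replicate snd_conv)
  have "lee_wt (w!j) \<le> sum_list (map lee_wt w)"
    using elem_le_sum_list[of j "map lee_wt w"] j lw by simp
  with le uw lee_wt_pos[OF j(2)] have lee_j: "lee_wt (w!j) = 1" and lee_w: "sum_list (map lee_wt w) = 1"
    by auto
  \<comment> \<open>doubling \<open>c\<close> kills its binary part and turns its Lee weight 1 entry into a 2\<close>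
  have "z2z4_add c c = (map2 (\<lambda>a b. (a + b) mod 2) u u, map (\<lambda>a. (a + a) mod 4) w)"
    unfolding z2z4_add_def uw by (simp add: zip_same_conv_map)
  then have wcc: "z2z4_weight (z2z4_add c c) = sum_list (map lee_wt (map (\<lambda>a. (a + a) mod 4) w))"
    unfolding z2z4_weight_def by (simp add: zip_same_conv_map filter_empty_conv)
  have "lee_wt ((w!j + w!j) mod 4) \<le> z2z4_weight (z2z4_add c c)"
    unfolding wcc using elem_le_sum_list[of j "map lee_wt (map (\<lambda>a. (a + a) mod 4) w)"] j lw by simp
  moreover have "w!j < 4" using w4 j lw by (simp add: nth_mem)
  ultimately have "2 \<le> z2z4_weight (z2z4_add c c)" using lee_wt_double[OF _ lee_j] by simp
  moreover have "z2z4_weight (z2z4_add c c) \<le> 2"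
    using wcc sum_list_lee_wt_double_le[OF w4] lee_w by simp
  ultimately show False using min_weight[OF add_mem[OF c c]] by simp
qed

definition binary_codewords :: "nat list set" where
  "binary_codewords = {u. (u, replicate \<beta> 0) \<in> C}"

lemma binary_codewords_binvecs: "binary_codewords \<subseteq> binvecs \<alpha>"
  unfolding binary_codewords_def binvecs_def using code_subset_space unfolding z2z4_space_def by auto

lemma binary_codewords_cover:
  assumes x: "x \<in> binvecs \<alpha>"
  shows "\<exists>u\<in>binary_codewords. hamming_dist x u \<le> 1"
proof -
  have lx: "length x = \<alpha>" and x2: "\<forall>a\<in>set x. a < 2" using x unfolding binvecs_def by auto
  then have "(x, replicate \<beta> 0) \<in> z2z4_space \<alpha> \<beta>" unfolding z2z4_space_def by auto
  then obtain c where c: "c \<in> C" and d: "z2z4_weight (z2z4_add (x, replicate \<beta> 0) (z2z4_neg c)) \<le> 1"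
    by (rule covering)
  obtain u w where uw: "c = (u, w)" by (cases c)
  have lu: "length u = \<alpha>" and lw: "length w = \<beta>" and u2: "\<forall>a\<in>set u. a < 2" and w4: "\<forall>a\<in>set w. a < 4"
    using code_subset_space[OF c] uw unfolding z2z4_space_def by auto
  have "map2 (\<lambda>a b. (a + b) mod 4) (replicate \<beta> 0) (map (\<lambda>a. (4 - a) mod 4) w) = map (\<lambda>a. (4 - a) mod 4) w"
    using lw by (intro nth_equalityI) auto
  then have "z2z4_weight (z2z4_add (x, replicate \<beta> 0) (z2z4_neg c)) =
      hamming_dist x u + sum_list (map lee_wt w)"
    unfolding z2z4_add_def z2z4_neg_def z2z4_weight_def uw
    using hamming_dist_binary[of x u] lx x2 lu u2 sum_list_lee_wt_neg[OF w4] by simp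
  with d have "hamming_dist x u \<le> 1" and "sum_list (map lee_wt w) \<le> 1" by auto
  moreover have "u \<in> binary_codewords"
    using Z4_part_eq_0_of_Lee_weight_le_1[OF c] calculation(2) c uw unfolding binary_codewords_def by simp
  ultimately show ?thesis by blast
qed

lemma card_binary_codewords: "2 ^ \<alpha> \<le> card binary_codewords * (\<alpha> + 1)"
  using covering_radius_1_card_bound[OF binary_codewords_binvecs] binary_codewords_cover by blast

end

locale cyclic_parity_extension = z2z4_perfect_code +
  fixes p :: nat
  assumes p_le: "p \<le> \<alpha>" and cyclic: "z2z4_cyclic (parity_extend p ` C)"
begin

abbreviation D :: "z2z4vec set" where
  "D \<equiv> parity_extend p ` C"

lemma D_add_mem:
  assumes "v \<in> D" "w \<in> D"
  shows "z2z4_add v w \<in> D"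
proof -
  obtain c d where c: "c \<in> C" and d: "d \<in> C" and "v = parity_extend p c" "w = parity_extend p d"
    using assms by auto
  then have "z2z4_add v w = parity_extend p (z2z4_add c d)"
    using parity_extend_add[OF code_subset_space code_subset_space p_le] by simp
  then show ?thesis using add_mem[OF c d] by simp
qed

lemma D_neg_mem:
  assumes "v \<in> D"
  shows "z2z4_neg v \<in> D"
proof -
  obtain c where c: "c \<in> C" and "v = parity_extend p c" using assms by auto
  then have "z2z4_neg v = parity_extend p (z2z4_neg c)" using parity_extend_neg[OF code_subset_space] by simp
  then show ?thesis using neg_mem[OF c] by simp
qed

lemma D_subset_space: "v \<in> D \<Longrightarrow> v \<in> z2z4_space (Suc \<alpha>) \<beta>"
  using parity_extend_space[OF code_subset_space p_le] by auto

lemma D_funpow_sigma_mem: "v \<in> D \<Longrightarrow> (z2z4_sigma ^^ k) v \<in> D"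
  using z2z4_cyclic_funpow[OF cyclic] .

lemma parity_extend_binary:
  assumes "\<forall>a\<in>set u. a < 2"
  shows "parity_extend p (u, w) =
    (take p u @ [(sum_list u + sum_list (map lee_wt w)) mod 2] @ drop p u, w)"
  using z2z4_weight_binary[OF assms] unfolding parity_extend_def by simp

lemma binary_weight_2_not_mem:
  assumes y: "(y, replicate \<beta> 0) \<in> D"
  shows "sum_list y \<noteq> 2"
proof
  assume s: "sum_list y = 2"
  obtain c where c: "c \<in> C" "parity_extend p c = (y, replicate \<beta> 0)" using y by auto
  obtain u where cu: "c = (u, replicate \<beta> 0)" and u: "\<forall>a\<in>set u. a < 2"
    using c code_subset_space[OF c(1)] unfolding parity_extend_def z2z4_space_def by (cases c) auto
  have w: "z2z4_weight c = sum_list u" using z2z4_weight_binary[OF u] cu by (simp add: lee_wt_def)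
  have "y = take p u @ [sum_list u mod 2] @ drop p u"
    using c(2) cu parity_extend_binary[OF u, of "replicate \<beta> 0"] by (simp add: lee_wt_def sum_list_replicate)
  then have "sum_list y = sum_list u + sum_list u mod 2" by (simp add: sum_list_insert_at del: sum_list_append)
  with s w have "z2z4_weight c \<noteq> 0" and "z2z4_weight c < 3" by linarith+
  then show False using min_weight[OF c(1)] by simp
qed

definition binary_subcode :: "nat list set" where
  "binary_subcode = {y. (y, replicate \<beta> 0) \<in> D}"

lemma binary_subcode_binvecs: "binary_subcode \<subseteq> binvecs (Suc \<alpha>)"
  unfolding binary_subcode_def binvecs_def using D_subset_space unfolding z2z4_space_def by auto

lemma zero_mem_binary_subcode: "replicate (Suc \<alpha>) 0 \<in> binary_subcode"
proof -
  have "take p (replicate \<alpha> 0) @ [0] @ drop p (replicate \<alpha> (0::nat)) = replicate (Suc \<alpha>) 0"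
    using p_le by (intro replicate_eqI) (auto dest: in_set_takeD in_set_dropD)
  then have "parity_extend p (z2z4_zero \<alpha> \<beta>) = (replicate (Suc \<alpha>) 0, replicate \<beta> 0)"
    using z2z4_weight_zero[of \<alpha> \<beta>] unfolding parity_extend_def z2z4_zero_def by simp
  then show ?thesis unfolding binary_subcode_def using zero_mem by force
qed

lemma bin_add_mem_binary_subcode:
  "x \<in> binary_subcode \<Longrightarrow> y \<in> binary_subcode \<Longrightarrow> bin_add x y \<in> binary_subcode"
  using D_add_mem[of "(x, replicate \<beta> 0)" "(y, replicate \<beta> 0)"]
  unfolding binary_subcode_def z2z4_add_def bin_add_def by (simp add: zip_same_conv_map)

text \<open>\<open>\<sigma>\<^sup>\<alpha>\<close> fixes the zero \<open>\<int>\<^sub>4\<close> part and rotates the binary part of length \<open>\<alpha> + 1\<close> by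
\<open>\<alpha>\<^sup>2 \<equiv> 1\<close>.\<close>
lemma rotate_1_mem_binary_subcode:
  assumes x: "x \<in> binary_subcode"
  shows "rotate 1 x \<in> binary_subcode"
proof -
  have lx: "length x = Suc \<alpha>" using x binary_subcode_binvecs unfolding binvecs_def by auto
  have "(z2z4_sigma ^^ \<alpha>) (x, replicate \<beta> 0) = (rotate (\<alpha> * \<alpha>) x, replicate \<beta> 0)"
    using lx by (simp add: funpow_z2z4_sigma rotate_replicate)
  moreover have "rotate (\<alpha> * \<alpha>) x = rotate 1 x"
  proof (cases "\<alpha> = 0")
    case False
    then have "(\<alpha> * \<alpha>) mod Suc \<alpha> = 1" using mod_square_pred[of "Suc \<alpha>"] by simp
    with lx show ?thesis by (metis rotate_conv_mod)
  qed (use lx in simp)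
  moreover have "(z2z4_sigma ^^ \<alpha>) (x, replicate \<beta> 0) \<in> D"
    using D_funpow_sigma_mem x unfolding binary_subcode_def by simp
  ultimately show ?thesis unfolding binary_subcode_def by simp
qed

lemma bin_add_rotate_mem_binary_subcode: "x \<in> binary_subcode \<Longrightarrow> bin_add_rotate 1 x \<in> binary_subcode"
  unfolding bin_add_rotate_def by (intro bin_add_mem_binary_subcode rotate_1_mem_binary_subcode)

lemma card_binary_subcode: "2 ^ \<alpha> \<le> card binary_subcode * (\<alpha> + 1)"
proof -
  let ?g = "\<lambda>u. take p u @ [sum_list u mod 2] @ drop p u"
  have img: "?g ` binary_codewords \<subseteq> binary_subcode"
  proof
    fix y assume "y \<in> ?g ` binary_codewords"
    then obtain u where u: "(u, replicate \<beta> 0) \<in> C" "y = ?g u"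
      unfolding binary_codewords_def by auto
    then have "\<forall>a\<in>set u. a < 2" using code_subset_space unfolding z2z4_space_def by auto
    with u have "parity_extend p (u, replicate \<beta> 0) = (y, replicate \<beta> 0)"
      using parity_extend_binary by (simp add: lee_wt_def sum_list_replicate)
    with u show "y \<in> binary_subcode" unfolding binary_subcode_def by force
  qed
  moreover have inj: "inj_on ?g binary_codewords"
  proof
    fix u v assume uv: "u \<in> binary_codewords" "v \<in> binary_codewords" "?g u = ?g v"
    have "length u = \<alpha>" "length v = \<alpha>" using uv binary_codewords_binvecs unfolding binvecs_def by auto
    then have "take p (?g u) @ drop (Suc p) (?g u) = u" "take p (?g v) @ drop (Suc p) (?g v) = v"
      using p_le by simp_all
    with uv show "u = v" by metis
  qed
  moreover have "finite binary_subcode" using binary_subcode_binvecs finite_binvecs finite_subset by blast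
  ultimately have "card binary_codewords \<le> card binary_subcode"
    using card_image[OF inj] card_mono[OF _ img] by simp
  then show ?thesis using card_binary_codewords by (meson le_trans mult_le_mono1)
qed

lemma card_binary_subcode_ge:
  assumes r: "3 \<le> r" and \<alpha>: "\<alpha> = 2 ^ r - 1"
  shows "2 ^ (2 ^ (r - 1)) \<le> card binary_subcode"
proof -
  define A where "A = (2::nat) ^ (r - 1)"
  have N: "Suc \<alpha> = 2 * A" unfolding \<alpha> A_def using r by (simp flip: power_Suc)
  have "2 ^ A * 2 ^ r = (2::nat) ^ (A + r)" by (simp add: power_add)
  also have "\<dots> \<le> 2 ^ \<alpha>" using N two_pow_pred_ge[OF r] unfolding A_def by (intro power_increasing) auto
  also have "\<dots> \<le> card binary_subcode * 2 ^ r" using card_binary_subcode \<alpha> by simp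
  finally show ?thesis unfolding A_def by simp
qed

lemma r_ge_3_impossible:
  assumes r: "3 \<le> r" and \<alpha>: "\<alpha> = 2 ^ r - 1"
  shows False
proof -
  define N A where "N = Suc \<alpha>" and "A = (2::nat) ^ (r - 1)"
  have N: "N = 2 ^ r" unfolding N_def \<alpha> by simp
  have NA: "N = 2 * A" unfolding N A_def using r by (simp flip: power_Suc)
  have A0: "0 < A" unfolding A_def by simp
  interpret chain: nilpotent_modulo_subgroup "binvecs N" binary_subcode bin_add "bin_add_rotate 1" N
  proof
    fix x assume x: "x \<in> binvecs N"
    have "(bin_add_rotate 1 ^^ N) x = bin_add_rotate N x"
      using funpow_bin_add_rotate_1[OF x, of r] N by simp
    then show "(bin_add_rotate 1 ^^ N) x \<in> binary_subcode"
      using bin_add_rotate_length_eq_zero[OF x] zero_mem_binary_subcode N_def by simp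
  qed (use binary_subcode_binvecs N_def finite_binvecs bin_add_binvecs bin_add_comm bin_add_cancel
      bin_add_mem_binary_subcode bin_add_rotate_binvecs bin_add_rotate_bin_add
      bin_add_rotate_mem_binary_subcode in auto)
  have "card (binvecs N) = 2 ^ A * 2 ^ A" using NA by (simp add: card_binvecs power_add[symmetric] mult_2)
  also have "\<dots> \<le> 2 ^ A * card binary_subcode"
    using card_binary_subcode_ge[OF r \<alpha>] unfolding A_def by simp
  finally have "chain.preimage A = binvecs N" by (rule chain.preimage_eq_space)
  moreover have e: "1 # replicate (N - 1) 0 \<in> binvecs N" using NA A0 by (intro unit_binvecs) simp
  ultimately have "(bin_add_rotate 1 ^^ A) (1 # replicate (N - 1) 0) \<in> binary_subcode"
    unfolding chain.preimage_def by blast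
  then have "(bin_add_rotate A (1 # replicate (N - 1) 0), replicate \<beta> 0) \<in> D"
    using funpow_bin_add_rotate_1[OF e, of "r - 1"] unfolding A_def binary_subcode_def by simp
  then show False
    using binary_weight_2_not_mem sum_list_bin_add_rotate_unit[OF A0 NA] by blast
qed

end

section \<open>The case \<open>\<alpha> = 3\<close>\<close>

locale cyclic_parity_extension_alpha_3 = cyclic_parity_extension +
  assumes \<alpha>: "\<alpha> = 3" and \<beta>: "\<beta> mod 4 = 2"
begin

lemma funpow_sigma_length_4:
  "length x = 4 \<Longrightarrow> length w = \<beta> \<Longrightarrow>
   (z2z4_sigma ^^ h) (x, w) = (rotate ((h * 3) mod 4) x, rotate (h * (\<beta> - 1)) w)"
  by (simp add: funpow_z2z4_sigma rotate_conv_mod[of "h * 3"])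

lemma Z4_part_sum_even:
  assumes c: "c \<in> C"
  shows "even (sum_list (snd c))"
proof (rule ccontr)
  assume odd: "odd (sum_list (snd c))"
  obtain u w where uw: "c = (u, w)" by (cases c)
  have cs: "c \<in> z2z4_space \<alpha> \<beta>" using code_subset_space[OF c] .
  with uw have lw: "length w = \<beta>" and w4: "\<forall>a\<in>set w. a < 4" unfolding z2z4_space_def by auto
  define x where "x = take p u @ [z2z4_weight c mod 2] @ drop p u"
  have D: "(x, w) \<in> D" using c uw unfolding x_def parity_extend_def by force
  then have x: "x \<in> binvecs 4" using D_subset_space \<alpha> unfolding z2z4_space_def binvecs_def by auto
  have "odd (sum_list x)"
    using z2z4_weight_mod_2[OF cs] odd_add_parity[OF odd] uw
    unfolding x_def by (simp add: sum_list_insert_at del: sum_list_append)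
  \<comment> \<open>\<open>\<sigma>\<^sup>\<beta>\<close> fixes \<open>w\<close> and rotates \<open>x\<close> by \<open>3\<beta> \<equiv> 2 (mod 4)\<close>\<close>
  have "(3 * \<beta>) mod 4 = 2" using \<beta> mod_mult_right_eq[of 3 \<beta> 4] by simp
  then have D': "(rotate 2 x, w) \<in> D"
    using D_funpow_sigma_mem[OF D, of \<beta>] x lw funpow_sigma_length_4[of x w \<beta>]
    by (simp add: binvecs_def mult.commute)
  have "(bin_add x (rotate 2 x), replicate \<beta> 0) \<in> D"
    using D_add_mem[OF D D_neg_mem[OF D']] z2z4_add_neg_same_Z4[OF w4] lw by simp
  then show False
    using binary_weight_2_not_mem sum_list_bin_add_rotate_2_odd[OF x \<open>odd (sum_list x)\<close>]
    unfolding bin_add_rotate_def by blast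
qed

text \<open>The codeword covering \<open>(0, z)\<close> is at distance exactly 1, and parity puts that
distance into the binary part.\<close>
lemma codeword_over_Lee_weight_2:
  assumes lz: "length z = \<beta>" and z4: "\<forall>a\<in>set z. a < 4" and ez: "even (sum_list z)"
    and lee: "sum_list (map lee_wt z) = 2"
  obtains u where "(u, z) \<in> C" "sum_list u = 1"
proof -
  define v where "v = (replicate 3 (0::nat), z)"
  have vs: "v \<in> z2z4_space \<alpha> \<beta>" unfolding v_def z2z4_space_def using \<alpha> lz z4 by auto
  obtain c where c: "c \<in> C" and dist: "z2z4_weight (z2z4_add v (z2z4_neg c)) \<le> 1"
    using covering[OF vs] by blast
  obtain u w where uw: "c = (u, w)" by (cases c)
  have cs: "c \<in> z2z4_space \<alpha> \<beta>" using code_subset_space[OF c] .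
  with uw \<alpha> have lu: "length u = 3" and lw: "length w = \<beta>" and u2: "\<forall>a\<in>set u. a < 2"
    and w4: "\<forall>a\<in>set w. a < 4" unfolding z2z4_space_def by auto
  define q where "q = map2 (\<lambda>a b. (a + b) mod 4) z (map (\<lambda>a. (4 - a) mod 4) w)"
  have d: "z2z4_add v (z2z4_neg c) = (u, q)"
    unfolding v_def z2z4_add_def z2z4_neg_def uw q_def using lu u2
    by (auto intro!: nth_equalityI simp: nth_mem)
  have wd: "z2z4_weight (u, q) = sum_list u + sum_list (map lee_wt q)"
    using z2z4_weight_binary[OF u2] .
  have "z2z4_weight v = 2" unfolding v_def z2z4_weight_def using lee by simp
  then have "v \<noteq> c" using min_weight[OF c] by auto
  then have "z2z4_weight (u, q) = 1"
    using eq_of_weight_diff_eq_0[OF vs c] dist d by fastforce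
  then have "(sum_list u + sum_list q) mod 2 = 1"
    using z2z4_weight_mod_2[OF z2z4_space_add[OF vs z2z4_space_neg[OF cs]]] d by simp
  then have "odd (sum_list u + sum_list q)" by (simp only: odd_iff_mod_2_eq_one)
  moreover have "sum_list q mod 2 = (sum_list z + sum_list w) mod 2"
    using sum_list_map2_mod_even[of 4 z "map (\<lambda>a. (4 - a) mod 4) w"] lz lw
      mod_add_cong[OF refl sum_list_neg_mod_2[OF w4], of "sum_list z"]
    unfolding q_def by simp
  then have "even (sum_list q) = even (sum_list z + sum_list w)"
    by (simp only: even_iff_mod_2_eq_zero)
  moreover have "even (sum_list w)" using Z4_part_sum_even[OF c] uw by simp
  ultimately have "odd (sum_list u)" using ez by simp
  with wd \<open>z2z4_weight (u, q) = 1\<close> have su: "sum_list u = 1" and "sum_list (map lee_wt q) = 0"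
    by (auto elim: oddE)
  then have "z2z4_weight (z2z4_add (u, z) (z2z4_neg c)) = 0"
    unfolding z2z4_add_def z2z4_neg_def z2z4_weight_def uw q_def
    by (simp add: zip_same_conv_map filter_empty_conv)
  then have "(u, z) = c"
    using eq_of_weight_diff_eq_0 c lu u2 lz z4 \<alpha> unfolding z2z4_space_def by auto
  with c su show ?thesis by (intro that) simp_all
qed

text \<open>Adding or subtracting the image under \<open>\<sigma>\<^sup>h\<close> cancels the \<open>\<int>\<^sub>4\<close> part, leaving a purely
binary word of \<open>D\<close>.\<close>
lemma parity_extension_alternating:
  assumes c: "(u, z) \<in> C" and su: "sum_list u = 1" and lee: "sum_list (map lee_wt z) = 2"
    and h: "(h * 3) mod 4 = 1 \<or> (h * 3) mod 4 = 3"
    and rz: "rotate (h * (\<beta> - 1)) z = z \<or> rotate (h * (\<beta> - 1)) z = map (\<lambda>a. (4 - a) mod 4) z"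
  shows "take p u @ [1] @ drop p u = [1, 0, 1, 0] \<or> take p u @ [1] @ drop p u = [0, 1, 0, 1]"
proof -
  define x where "x = take p u @ [1] @ drop p u"
  define k where "k = (h * 3) mod 4"
  have u2: "\<forall>a\<in>set u. a < 2" and lz: "length z = \<beta>" and z4: "\<forall>a\<in>set z. a < 4"
    using code_subset_space[OF c] unfolding z2z4_space_def by auto
  have D: "(x, z) \<in> D"
    using c parity_extend_binary[OF u2, of z] su lee unfolding x_def by force
  then have x: "x \<in> binvecs 4" using D_subset_space \<alpha> unfolding z2z4_space_def binvecs_def by auto
  have sx: "sum_list x = 2" using su unfolding x_def by (simp add: sum_list_insert_at del: sum_list_append)
  have D': "(rotate k x, rotate (h * (\<beta> - 1)) z) \<in> D"
    using D_funpow_sigma_mem[OF D, of h] funpow_sigma_length_4[of x z h] x lz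
    unfolding k_def binvecs_def by simp
  have "(bin_add_rotate k x, replicate \<beta> 0) \<in> D"
    using rz
  proof
    assume "rotate (h * (\<beta> - 1)) z = z"
    then show ?thesis
      using D_add_mem[OF D D_neg_mem[OF D']] z2z4_add_neg_same_Z4[OF z4] lz
      unfolding bin_add_rotate_def by simp
  next
    assume "rotate (h * (\<beta> - 1)) z = map (\<lambda>a. (4 - a) mod 4) z"
    then show ?thesis
      using D_add_mem[OF D' D] z2z4_add_same_neg_Z4[OF z4] lz bin_add_comm
      unfolding bin_add_rotate_def by simp
  qed
  then show ?thesis
    using binary_weight_2_not_mem alternating_of_bin_add_rotate_odd[OF x sx] h
    unfolding x_def k_def by blast
qed

lemma fixed_negated_pair_impossible:
  assumes z1: "length z1 = \<beta>" "\<forall>a\<in>set z1. a < 4" "even (sum_list z1)" "sum_list (map lee_wt z1) = 2"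
    and z2: "length z2 = \<beta>" "\<forall>a\<in>set z2. a < 4" "even (sum_list z2)" "sum_list (map lee_wt z2) = 2"
    and h: "(h * 3) mod 4 = 1 \<or> (h * 3) mod 4 = 3"
    and fixed: "rotate (h * (\<beta> - 1)) z1 = z1"
    and negated: "rotate (h * (\<beta> - 1)) z2 = map (\<lambda>a. (4 - a) mod 4) z2"
    and diff: "sum_list (map lee_wt (map2 (\<lambda>a b. (a + b) mod 4) z1 (map (\<lambda>a. (4 - a) mod 4) z2))) = 2"
  shows False
proof -
  obtain u1 where u1: "(u1, z1) \<in> C" "sum_list u1 = 1" using codeword_over_Lee_weight_2[OF z1] .
  obtain u2 where u2: "(u2, z2) \<in> C" "sum_list u2 = 1" using codeword_over_Lee_weight_2[OF z2] .
  have l: "length u1 = 3" "length u2 = 3"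
    using code_subset_space[OF u1(1)] code_subset_space[OF u2(1)] \<alpha> unfolding z2z4_space_def by auto
  let ?x = "\<lambda>u. take p u @ [1] @ drop p u"
  have "?x u1 = ?x u2"
  proof (rule alternating_eq)
    show "?x u1 = [1, 0, 1, 0] \<or> ?x u1 = [0, 1, 0, 1]"
      using parity_extension_alternating[OF u1 z1(4) h] fixed by blast
    show "?x u2 = [1, 0, 1, 0] \<or> ?x u2 = [0, 1, 0, 1]"
      using parity_extension_alternating[OF u2 z2(4) h] negated by blast
    show "p < 4" "?x u1 ! p = 1" "?x u2 ! p = 1" using p_le \<alpha> l by (simp_all add: nth_append)
  qed
  then have "take p (?x u1) @ drop (Suc p) (?x u1) = take p (?x u2) @ drop (Suc p) (?x u2)" by simp
  then have "u1 = u2" using p_le \<alpha> l by simp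
  have "z2z4_add (u1, z1) (z2z4_neg (u1, z2)) \<in> C"
    using add_mem[OF u1(1) neg_mem] u2(1) \<open>u1 = u2\<close> by simp
  moreover have "z2z4_weight (z2z4_add (u1, z1) (z2z4_neg (u1, z2))) = 2"
    unfolding z2z4_weight_def z2z4_add_def z2z4_neg_def using diff
    by (simp add: zip_same_conv_map filter_empty_conv)
  ultimately show False using min_weight by fastforce
qed

lemma beta_2_impossible: "\<beta> = 2 \<Longrightarrow> False"
  using fixed_negated_pair_impossible[of "[1, 1]" "[1, 3]" 1] by (simp add: lee_wt_def)

lemma beta_6_impossible:
  assumes "\<beta> = 6"
  shows False
proof -
  have "rotate 15 [1, 0, 0, 1, 0, 0::nat] = [1, 0, 0, 1, 0, 0]"
    and "rotate 15 [1, 0, 0, 3, 0, 0::nat] = [3, 0, 0, 1, 0, 0]"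
    by (simp_all add: rotate_def numeral_eq_Suc)
  then show False
    using fixed_negated_pair_impossible[of "[1, 0, 0, 1, 0, 0]" "[1, 0, 0, 3, 0, 0]" 3] assms
    by (simp add: lee_wt_def)
qed

end

lemma (in cyclic_parity_extension) alpha_3_impossible:
  assumes "\<alpha> = 3" and "\<beta> = 2 \<or> \<beta> = 6"
  shows False
proof -
  interpret cyclic_parity_extension_alpha_3 \<alpha> \<beta> C p
    by unfold_locales (use assms in auto)
  show False using assms(2) beta_2_impossible beta_6_impossible by blast
qed

theorem theorem4p2:
  fixes r t p :: nat and C :: "z2z4vec set"
  assumes "2 \<le> r" "r \<le> t" "t \<le> 2 * r" "3 \<le> t"
    and "z2z4_one_perfect (2 ^ r - 1) (2 ^ (t - 1) - 2 ^ (r - 1)) C"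
    and "p \<le> 2 ^ r - 1"
  shows "\<not> z2z4_cyclic (parity_extend p ` C)"
proof
  assume "z2z4_cyclic (parity_extend p ` C)"
  with assms(5,6) interpret cyclic_parity_extension "2 ^ r - 1" "2 ^ (t - 1) - 2 ^ (r - 1)" C p
    by unfold_locales
  show False
  proof (cases "3 \<le> r")
    case True
    then show False using r_ge_3_impossible by blast
  next
    case False
    with assms(1-4) have "r = 2" "t = 3 \<or> t = 4" by auto
    then show False by (intro alpha_3_impossible) auto
  qed
qed

end
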